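(* Let $\mathtt{A}$ be the set-theoretic operad generated by a binary generator $C$ with the symmetry $C_{a,b}=C_{b,a}$ and a binary generator $D$ with no symmetry, subject to the relations (where $*$ denotes a composition slot) $$D_{*,1}\circ_* D_{3,2}=D_{*,2}\circ_* D_{3,1}=D_{3,*}\circ_* C_{1,2},\qquad C_{*,1}\circ_* C_{2,3}=C_{*,2}\circ_* C_{3,1}.$$ Then the unique operad morphism $\phi:\mathtt{A}\to\operatorname{Arb}$ with $\phi(C_{1,2})=[1][2]$ and $\phi(D_{1,2})=[1\triangleleft 2]$ is an isomorphism. In other words, $\operatorname{Arb}$ is generated by $[1][2]$ and $[1\triangleleft 2]$ subject only to the relations $[*\triangleleft 1]\circ_*[3\triangleleft 2]=[*\triangleleft 2]\circ_*[3\triangleleft 1]=[3\triangleleft *]\circ_*[1][2]$ and $[*][1]\circ_*[2][3]=[*][2]\circ_*[3][1]$.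
   Context: A shrub $P$ on a finite set $I$ is a set $E$ of edges (unordered pairs of distinct elements of $I$) with a height function $h_P:I\to\mathbb{N}$; $j$ covers $i$ if $\{i,j\}\in E$ and $h_P(j)=h_P(i)+1$. Axioms: (1) edges join vertices whose heights differ by $1$; (2) every vertex of positive height covers some vertex; (3) no four distinct $a,b,c,d$ with $a$ covering $b$ and $c$, $c$ covering $d$, $\{b,d\}\notin E$; (4) no five distinct $a,b,c,d,e$ with $a$ covering $c,d$, $b$ covering $d,e$, $\{a,e\}\notin E$, $\{b,c\}\notin E$. $\operatorname{Arb}$ is the set-theoretic operad with $\operatorname{Arb}(I)$ the set of shrubs on $I$, relabelling action, unit the one-vertex shrub, and composition $P\circ_i P'$ (for $i\in I$, $P'$ on $I'$) defined as the shrub on $(I\setminus\{i\})\sqcup I'$ with height $h_P$ on $I\setminus\{i\}$ and $h_{P'}+h_P(i)$ on $I'$, whose edges are the edges of $P$ not containing $i$, the edges of $P'$, and all pairs $\{j,k\}$ with $j$ adjacent to $i$ in $P$ and $k$ of height $0$ in $P'$. Notation: $[a][b]$ is the shrub on $\{a,b\}$ with no edge (both of height $0$); $[a\triangleleft b]$ is the shrub on $\{a,b\}$ with the edge $\{a,b\}$, $h(a)=0$, $h(b)=1$. $C_{a,b}$, $D_{a,b}$ denote the generators with inputs labelled $a,b$. *)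

theory Defs
  imports Main
begin

text \<open>A shrub on a finite label set I is represented by its edge set E (a set of
unordered pairs, i.e. 2-element sets) and its height function h, normalised to be 0
outside I.\<close>

definition covers :: "'a set set \<Rightarrow> ('a \<Rightarrow> nat) \<Rightarrow> 'a \<Rightarrow> 'a \<Rightarrow> bool" where
  "covers E h j i \<longleftrightarrow> {i, j} \<in> E \<and> h j = h i + 1"

definition is_shrub :: "'a set \<Rightarrow> 'a set set \<Rightarrow> ('a \<Rightarrow> nat) \<Rightarrow> bool" where
  "is_shrub I E h \<longleftrightarrow>
     (\<forall>e\<in>E. \<exists>i j. e = {i, j} \<and> i \<noteq> j \<and> i \<in> I \<and> j \<in> I) \<and>
     (\<forall>x. x \<notin> I \<longrightarrow> h x = 0) \<and>
     (\<forall>i j. {i, j} \<in> E \<longrightarrow> h i = h j + 1 \<or> h j = h i + 1) \<and>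
     (\<forall>a\<in>I. 0 < h a \<longrightarrow> (\<exists>b. covers E h a b)) \<and>
     \<not> (\<exists>a b c d. distinct [a, b, c, d] \<and> covers E h a b \<and> covers E h a c \<and>
            covers E h c d \<and> {b, d} \<notin> E) \<and>
     \<not> (\<exists>a b c d e. distinct [a, b, c, d, e] \<and> covers E h a c \<and> covers E h a d \<and>
            covers E h b d \<and> covers E h b e \<and> {a, e} \<notin> E \<and> {b, c} \<notin> E)"

datatype 'a tm = Leaf 'a | C "'a tm" "'a tm" | D "'a tm" "'a tm"

fun leaves :: "'a tm \<Rightarrow> 'a set" where
  "leaves (Leaf a) = {a}"
| "leaves (C x y) = leaves x \<union> leaves y"
| "leaves (D x y) = leaves x \<union> leaves y"

text \<open>Linear terms: every label occurs at most once (elements of arity leaves t).\<close>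
fun linear :: "'a tm \<Rightarrow> bool" where
  "linear (Leaf a) = True"
| "linear (C x y) = (linear x \<and> linear y \<and> leaves x \<inter> leaves y = {})"
| "linear (D x y) = (linear x \<and> linear y \<and> leaves x \<inter> leaves y = {})"

text \<open>Subtrees are arbitrary (closure under operadic composition), and the relation is
  a congruence for the tree constructors.\<close>
inductive eqA :: "'a tm \<Rightarrow> 'a tm \<Rightarrow> bool" where
  eq_refl: "eqA t t"
| eq_sym: "eqA s t \<Longrightarrow> eqA t s"
| eq_trans: "eqA s t \<Longrightarrow> eqA t u \<Longrightarrow> eqA s u"
| eq_C1: "eqA x x' \<Longrightarrow> eqA (C x y) (C x' y)"
| eq_C2: "eqA y y' \<Longrightarrow> eqA (C x y) (C x y')"
| eq_D1: "eqA x x' \<Longrightarrow> eqA (D x y) (D x' y)"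
| eq_D2: "eqA y y' \<Longrightarrow> eqA (D x y) (D x y')"
| eq_Csym: "eqA (C x y) (C y x)"
| eq_rel1: "eqA (D (D x y) z) (D (D x z) y)"
| eq_rel2: "eqA (D (D x y) z) (D x (C z y))"
| eq_rel3: "eqA (C (C x y) z) (C (C y z) x)"

text \<open>phi(Leaf a) is the one-vertex shrub; phi(C x y) = [a][b] \<circ>_a phi x \<circ>_b phi y and
  phi(D x y) = [a \<triangleleft> b] \<circ>_a phi x \<circ>_b phi y, written out via the composition of Arb.\<close>
fun phi :: "'a tm \<Rightarrow> 'a set set \<times> ('a \<Rightarrow> nat)" where
  "phi (Leaf a) = ({}, (\<lambda>_. 0))"
| "phi (C x y) = (let (Ex, hx) = phi x; (Ey, hy) = phi y in
     (Ex \<union> Ey, (\<lambda>i. if i \<in> leaves y then hy i else hx i)))"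
| "phi (D x y) = (let (Ex, hx) = phi x; (Ey, hy) = phi y in
     (Ex \<union> Ey \<union> {{j, k} | j k. j \<in> leaves y \<and> hy j = 0 \<and> k \<in> leaves x \<and> hx k = 0},
      (\<lambda>i. if i \<in> leaves y then hy i + 1 else hx i)))"

end

(*
  The compositions of Arb used by phi, disjoint union for C and grafting the second shrub onto
  the roots of the first for D, preserve the shrub axioms, and the two sides of each defining
  relation of A compute the same shrub.

  Conversely, a shrub on more than one vertex is either disconnected, and then the disjoint union
  of a closed set of vertices and its complement, or connected.  In the connected case a vertex of
  height 1 with a maximal set of children is adjacent to every root, and the shrub is the graft of
  its upper part (the vertices all of whose height-1 descendants are adjacent to every root) onto
  the remaining vertices.  Induction on the number of vertices gives surjectivity.

  For injectivity, associativity and commutativity of C rearrange a term whose shrub is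
  disconnected into a C-product along any closed set of vertices.  A term whose shrub is connected
  is a leaf or, after rewriting D (D p q) y to D p (C y q), of the form D x y with x not a D, and
  then the leaves of y form the upper part of the shrub.  Either way the two factors and their
  shrubs are determined by the shrub, and induction on the number of leaves concludes.
*)

theory Submission
  imports Defs
begin

abbreviation phi_edges :: "'a tm \<Rightarrow> 'a set set" where
  "phi_edges t \<equiv> fst (phi t)"

abbreviation phi_height :: "'a tm \<Rightarrow> 'a \<Rightarrow> nat" where
  "phi_height t \<equiv> snd (phi t)"

definition children :: "'a set set \<Rightarrow> ('a \<Rightarrow> nat) \<Rightarrow> 'a \<Rightarrow> 'a set" where
  "children E h v = {c. covers E h v c}"

definition roots :: "'a set \<Rightarrow> ('a \<Rightarrow> nat) \<Rightarrow> 'a set" where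
  "roots I h = {k \<in> I. h k = 0}"

definition complete_bipartite :: "'a set \<Rightarrow> 'a set \<Rightarrow> 'a set set" where
  "complete_bipartite A B = {{a, b} | a b. a \<in> A \<and> b \<in> B}"

definition edge_closed :: "'a set set \<Rightarrow> 'a set \<Rightarrow> bool" where
  "edge_closed E J \<longleftrightarrow> (\<forall>i j. {i, j} \<in> E \<longrightarrow> i \<in> J \<longrightarrow> j \<in> J)"

definition edge_connected :: "'a set \<Rightarrow> 'a set set \<Rightarrow> bool" where
  "edge_connected I E \<longleftrightarrow> (\<forall>J. edge_closed E J \<longrightarrow> J \<inter> I \<noteq> {} \<longrightarrow> I \<subseteq> J)"

definition restrict_edges :: "'a set set \<Rightarrow> 'a set \<Rightarrow> 'a set set" where
  "restrict_edges E J = {e \<in> E. e \<subseteq> J}"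

definition restrict_height :: "('a \<Rightarrow> nat) \<Rightarrow> 'a set \<Rightarrow> nat \<Rightarrow> 'a \<Rightarrow> nat" where
  "restrict_height h J s i = (if i \<in> J then h i - s else 0)"

abbreviation restrict_shrub ::
    "'a set set \<times> ('a \<Rightarrow> nat) \<Rightarrow> 'a set \<Rightarrow> nat \<Rightarrow> 'a set set \<times> ('a \<Rightarrow> nat)" where
  "restrict_shrub S J s \<equiv> (restrict_edges (fst S) J, restrict_height (snd S) J s)"

lemma phi_C [simp]:
  "phi_edges (C x y) = phi_edges x \<union> phi_edges y"
  "phi_height (C x y) = (\<lambda>i. if i \<in> leaves y then phi_height y i else phi_height x i)"
  by (simp_all add: split_def Let_def)

lemma phi_D [simp]:
  "phi_edges (D x y) = phi_edges x \<union> phi_edges y \<union>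
     complete_bipartite (roots (leaves y) (phi_height y)) (roots (leaves x) (phi_height x))"
  "phi_height (D x y) = (\<lambda>i. if i \<in> leaves y then phi_height y i + 1 else phi_height x i)"
  by (simp_all add: split_def Let_def complete_bipartite_def roots_def)

declare phi.simps(2,3) [simp del]

lemma finite_leaves [simp]: "finite (leaves t)"
  by (induction t) auto

lemma leaves_nonempty [simp]: "leaves t \<noteq> {}"
  by (induction t) auto

lemma phi_height_outside: "i \<notin> leaves t \<Longrightarrow> phi_height t i = 0"
  by (induction t) auto

lemma covers_height: "covers E h a b \<Longrightarrow> h a = Suc (h b)"
  by (simp add: covers_def)

lemma covers_iff_edge: "h a = Suc (h b) \<Longrightarrow> covers E h a b \<longleftrightarrow> {a, b} \<in> E"
  by (simp add: covers_def insert_commute)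

lemma covers_iff_children: "covers E h a b \<longleftrightarrow> b \<in> children E h a"
  by (simp add: children_def)

lemma children_height_zero: "h a = 0 \<Longrightarrow> children E h a = {}"
  by (auto simp: children_def dest: covers_height)

lemma roots_union:
  "A \<inter> B = {} \<Longrightarrow> roots (A \<union> B) (\<lambda>i. if i \<in> B then f i else g i) = roots A g \<union> roots B f"
  by (auto simp: roots_def)

lemma roots_graft:
  "A \<inter> B = {} \<Longrightarrow> roots (A \<union> B) (\<lambda>i. if i \<in> B then f i + 1 else g i) = roots A g"
  by (auto simp: roots_def)

lemma complete_bipartite_Un1:
  "complete_bipartite (A \<union> B) K = complete_bipartite A K \<union> complete_bipartite B K"
  by (auto simp: complete_bipartite_def)

lemma edge_closedD: "edge_closed E J \<Longrightarrow> {i, j} \<in> E \<Longrightarrow> i \<in> J \<Longrightarrow> j \<in> J"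
  unfolding edge_closed_def by blast

lemma edge_closed_covers: "edge_closed E J \<Longrightarrow> covers E h a b \<Longrightarrow> a \<in> J \<Longrightarrow> b \<in> J"
  unfolding edge_closed_def covers_def by (auto simp: insert_commute)

section \<open>Shrubs\<close>

text \<open>Axioms (3) and (4) say that siblings have the same children and that two vertices
  sharing a child have nested sets of children.\<close>

lemma is_shrubI:
  assumes "\<And>e. e \<in> E \<Longrightarrow> \<exists>i j. e = {i, j} \<and> i \<noteq> j \<and> i \<in> I \<and> j \<in> I"
    and "\<And>x. x \<notin> I \<Longrightarrow> h x = 0"
    and "\<And>i j. {i, j} \<in> E \<Longrightarrow> h i = h j + 1 \<or> h j = h i + 1"
    and "\<And>a. a \<in> I \<Longrightarrow> 0 < h a \<Longrightarrow> children E h a \<noteq> {}"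
    and siblings: "\<And>a b c. covers E h a b \<Longrightarrow> covers E h a c \<Longrightarrow> children E h b = children E h c"
    and nested: "\<And>a b d. covers E h a d \<Longrightarrow> covers E h b d \<Longrightarrow>
                   children E h a \<subseteq> children E h b \<or> children E h b \<subseteq> children E h a"
  shows "is_shrub I E h"
  unfolding is_shrub_def
proof (intro conjI notI)
  assume "\<exists>a b c d. distinct [a, b, c, d] \<and> covers E h a b \<and> covers E h a c \<and>
            covers E h c d \<and> {b, d} \<notin> E"
  then obtain a b c d where "covers E h a b" "covers E h a c" "covers E h c d" "{b, d} \<notin> E"
    by blast
  with siblings[of a b c] have "covers E h b d" "{b, d} \<notin> E"
    unfolding children_def by blast+
  then show False
    by (simp add: covers_def insert_commute)
next
  assume "\<exists>a b c d e. distinct [a, b, c, d, e] \<and> covers E h a c \<and> covers E h a d \<and>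
            covers E h b d \<and> covers E h b e \<and> {a, e} \<notin> E \<and> {b, c} \<notin> E"
  then obtain a b c d e where "covers E h a c" "covers E h a d" "covers E h b d" "covers E h b e"
      "{a, e} \<notin> E" "{b, c} \<notin> E"
    by blast
  with nested[of a d b] have "covers E h b c \<or> covers E h a e" "{a, e} \<notin> E" "{b, c} \<notin> E"
    unfolding children_def by blast+
  then show False
    by (auto simp: covers_def insert_commute)
next
  show "\<forall>a\<in>I. 0 < h a \<longrightarrow> (\<exists>b. covers E h a b)"
    using assms(4) unfolding children_def by blast
qed (use assms(1-3) in blast)+

lemma
  assumes "is_shrub I E h"
  shows shrub_edge: "e \<in> E \<Longrightarrow> \<exists>i j. e = {i, j} \<and> i \<noteq> j \<and> i \<in> I \<and> j \<in> I"
    and shrub_height_outside: "x \<notin> I \<Longrightarrow> h x = 0"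
    and shrub_edge_height: "{i, j} \<in> E \<Longrightarrow> h i = Suc (h j) \<or> h j = Suc (h i)"
    and shrub_covers_some: "a \<in> I \<Longrightarrow> 0 < h a \<Longrightarrow> \<exists>b. covers E h a b"
    and shrub_axiom3: "distinct [a, b, c, d] \<Longrightarrow> covers E h a b \<Longrightarrow> covers E h a c \<Longrightarrow>
            covers E h c d \<Longrightarrow> {b, d} \<in> E"
    and shrub_axiom4: "distinct [a, b, c, d, f] \<Longrightarrow> covers E h a c \<Longrightarrow> covers E h a d \<Longrightarrow>
            covers E h b d \<Longrightarrow> covers E h b f \<Longrightarrow> {a, f} \<notin> E \<Longrightarrow> {b, c} \<in> E"
  using assms unfolding is_shrub_def Suc_eq_plus1 by meson+

context
  fixes I E h
  assumes shrub: "is_shrub I E h"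
begin

lemma shrub_edgeE:
  assumes "e \<in> E"
  obtains i j where "e = {i, j}" "i \<noteq> j" "i \<in> I" "j \<in> I"
  using shrub_edge[OF shrub assms] by blast

lemma shrub_edge_in: "{i, j} \<in> E \<Longrightarrow> i \<in> I \<and> j \<in> I \<and> i \<noteq> j"
  by (drule shrub_edge[OF shrub]) (auto simp: doubleton_eq_iff)

lemma shrub_covers_in: "covers E h a b \<Longrightarrow> a \<in> I \<and> b \<in> I"
  unfolding covers_def using shrub_edge_in by blast

lemma shrub_children_subset: "children E h a \<subseteq> I"
  using shrub_covers_in unfolding children_def by blast

lemma shrub_children_nonempty: "a \<in> I \<Longrightarrow> 0 < h a \<Longrightarrow> children E h a \<noteq> {}"
  using shrub_covers_some[OF shrub] unfolding children_def by blast

lemma shrub_siblings: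
  assumes "covers E h a b" "covers E h a c"
  shows "children E h b = children E h c"
proof -
  have "d \<in> children E h c" if "covers E h a b" "covers E h a c" "covers E h b d" for b c d
  proof (cases "b = c")
    case False
    have heights: "h a = Suc (h b)" "h a = Suc (h c)" "h b = Suc (h d)"
      using that(1,2,3)[THEN covers_height] by simp_all
    with False have "distinct [a, c, b, d]"
      by auto
    with that have "{c, d} \<in> E"
      using shrub_axiom3[OF shrub] by blast
    with heights show ?thesis
      by (simp add: children_def covers_iff_edge)
  qed (use that in \<open>simp add: children_def\<close>)
  with assms show ?thesis
    unfolding children_def by blast
qed

lemma shrub_children_nested:
  assumes "covers E h a d" "covers E h b d"
  shows "children E h a \<subseteq> children E h b \<or> children E h b \<subseteq> children E h a"
proof (rule ccontr)
  assume "\<not> ?thesis"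
  then obtain c e where c: "covers E h a c" "\<not> covers E h b c"
    and e: "covers E h b e" "\<not> covers E h a e"
    unfolding children_def by blast
  have heights: "h a = Suc (h d)" "h b = Suc (h d)" "h c = h d" "h e = h d"
    using covers_height[OF assms(1)] covers_height[OF assms(2)]
      covers_height[OF c(1)] covers_height[OF e(1)] by simp_all
  then have "{a, e} \<notin> E" "{b, c} \<notin> E"
    using c e by (simp_all add: covers_iff_edge)
  moreover have "distinct [a, b, c, d, e]"
    using assms c e heights by auto
  ultimately show False
    using shrub_axiom4[OF shrub] assms c(1) e(1) by blast
qed

lemma children_level:
  assumes "covers E h a d"
  shows "children E h a \<subseteq> {k \<in> I. h k = h d}"
proof
  fix k
  assume "k \<in> children E h a"
  then have k: "covers E h a k"
    by (simp add: children_def)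
  show "k \<in> {k \<in> I. h k = h d}"
    using shrub_covers_in[OF k] covers_height[OF k] covers_height[OF assms] by simp
qed

lemma shrub_roots_nonempty:
  assumes "I \<noteq> {}"
  shows "roots I h \<noteq> {}"
proof -
  obtain v where v: "v \<in> I" and least: "\<And>w. w \<in> I \<Longrightarrow> h v \<le> h w"
    using assms ex_has_least_nat[of "\<lambda>v. v \<in> I" _ h] by blast
  have "h v = 0"
  proof (rule ccontr)
    assume "h v \<noteq> 0"
    then obtain w where "covers E h v w"
      using shrub_covers_some[OF shrub v] by blast
    then show False
      using least[of w] shrub_covers_in covers_height by fastforce
  qed
  with v show ?thesis
    by (auto simp: roots_def)
qed

end

lemma descends_height:
  "(covers E h)\<^sup>*\<^sup>* v u \<Longrightarrow> h u \<le> h v \<and> (h u = h v \<longrightarrow> u = v)"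
proof (induction rule: rtranclp_induct)
  case (step w u)
  with covers_height[OF step(2)] show ?case
    by linarith
qed simp

lemma shrub_descends_in:
  assumes shrub: "is_shrub I E h"
  shows "(covers E h)\<^sup>*\<^sup>* v u \<Longrightarrow> v \<in> I \<Longrightarrow> u \<in> I"
  by (induction rule: rtranclp_induct) (auto dest: shrub_covers_in[OF shrub])

lemma shrub_descendant_at_height:
  assumes shrub: "is_shrub I E h" and "v \<in> I" "k \<le> h v"
  shows "\<exists>u. (covers E h)\<^sup>*\<^sup>* v u \<and> h u = k"
  using assms(2,3)
proof (induction "h v - k" arbitrary: v)
  case 0
  then show ?case by auto
next
  case (Suc n)
  then obtain w where w: "covers E h v w"
    using shrub_covers_some[OF shrub] by fastforce
  with Suc have "n = h w - k" "w \<in> I" "k \<le> h w"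
    using covers_height[OF w] shrub_covers_in[OF shrub w] by auto
  with Suc.hyps(1) obtain u where "(covers E h)\<^sup>*\<^sup>* w u" "h u = k"
    by blast
  with w have "(covers E h)\<^sup>*\<^sup>* v u" "h u = k"
    by (simp_all add: converse_rtranclp_into_rtranclp)
  then show ?case
    by blast
qed

lemma shrub_descends_sibling:
  assumes shrub: "is_shrub I E h" and "covers E h a b" "covers E h a c" "(covers E h)\<^sup>*\<^sup>* c u"
  shows "u = c \<or> (covers E h)\<^sup>*\<^sup>* b u"
  using assms(4)
proof (cases rule: converse_rtranclpE)
  case (step d)
  with shrub_siblings[OF shrub assms(2,3)] have "covers E h b d"
    by (simp add: covers_iff_children)
  with step show ?thesis
    by (meson converse_rtranclp_into_rtranclp)
qed simp

lemma descends_from_height_one: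
  assumes "(covers E h)\<^sup>*\<^sup>* u w" "h u = 1" "h w = 0"
  shows "covers E h u w"
  using assms(1)
proof (cases rule: converse_rtranclpE)
  case (step c)
  with assms(2,3) descends_height[OF step(2)] covers_height[OF step(1)] show ?thesis
    by simp
qed (use assms in simp)

lemma edge_closed_descends:
  assumes "edge_closed E J" "(covers E h)\<^sup>*\<^sup>* v u"
  shows "v \<in> J \<longleftrightarrow> u \<in> J"
  using assms(2)
proof (induction rule: rtranclp_induct)
  case (step w u)
  then have "{u, w} \<in> E" "{w, u} \<in> E"
    by (simp_all add: covers_def insert_commute)
  with step.IH edge_closedD[OF assms(1)] show ?case
    by blast
qed simp

lemma shrub_edge_closed_roots:
  assumes shrub: "is_shrub I E h" and closed: "edge_closed E J"
  shows "v \<in> I \<Longrightarrow> v \<in> J \<Longrightarrow> J \<inter> roots I h \<noteq> {}"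
    and "roots I h \<subseteq> J \<Longrightarrow> I \<subseteq> J"
proof -
  have root_below: "\<exists>r \<in> roots I h. (v \<in> J \<longleftrightarrow> r \<in> J)" if v: "v \<in> I" for v
  proof -
    obtain r where "(covers E h)\<^sup>*\<^sup>* v r" "h r = 0"
      using shrub_descendant_at_height[OF shrub v, of 0] by blast
    with shrub_descends_in[OF shrub] v edge_closed_descends[OF closed] show ?thesis
      by (auto simp: roots_def)
  qed
  show "v \<in> I \<Longrightarrow> v \<in> J \<Longrightarrow> J \<inter> roots I h \<noteq> {}"
    using root_below by blast
  show "roots I h \<subseteq> J \<Longrightarrow> I \<subseteq> J"
    using root_below by blast
qed

lemma covers_restrict:
  assumes above: "\<And>v. v \<in> J \<Longrightarrow> s \<le> h v"
    and closed: "\<And>a b. a \<in> J \<Longrightarrow> s < h a \<Longrightarrow> covers E h a b \<Longrightarrow> b \<in> J"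
  shows "covers (restrict_edges E J) (restrict_height h J s) a b \<longleftrightarrow> a \<in> J \<and> s < h a \<and> covers E h a b"
proof
  assume "covers (restrict_edges E J) (restrict_height h J s) a b"
  then have "{b, a} \<in> E" "a \<in> J" "b \<in> J" "h a - s = Suc (h b - s)"
    by (auto simp: covers_def restrict_edges_def restrict_height_def)
  with above[of b] show "a \<in> J \<and> s < h a \<and> covers E h a b"
    by (simp add: covers_def) linarith
next
  assume a: "a \<in> J \<and> s < h a \<and> covers E h a b"
  with closed have "b \<in> J"
    by blast
  with a above[of b] show "covers (restrict_edges E J) (restrict_height h J s) a b"
    by (auto simp: covers_def restrict_edges_def restrict_height_def)
qed

lemma shrub_restrict:
  assumes shrub: "is_shrub I E h" and "J \<subseteq> I" and above: "\<And>v. v \<in> J \<Longrightarrow> s \<le> h v"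
    and closed: "\<And>a b. a \<in> J \<Longrightarrow> s < h a \<Longrightarrow> covers E h a b \<Longrightarrow> b \<in> J"
  shows "is_shrub J (restrict_edges E J) (restrict_height h J s)"
proof -
  note covers = covers_restrict[OF above closed]
  have children: "children (restrict_edges E J) (restrict_height h J s) a =
      (if a \<in> J \<and> s < h a then children E h a else {})" for a
    by (auto simp: children_def covers)
  show ?thesis
  proof (rule is_shrubI)
    show "\<exists>i j. e = {i, j} \<and> i \<noteq> j \<and> i \<in> J \<and> j \<in> J" if "e \<in> restrict_edges E J" for e
    proof -
      from that have "e \<in> E" "e \<subseteq> J"
        by (simp_all add: restrict_edges_def)
      with shrub_edge[OF shrub \<open>e \<in> E\<close>] show ?thesis
        by auto
    qed
    show "restrict_height h J s z = 0" if "z \<notin> J" for z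
      using that by (simp add: restrict_height_def)
    show "restrict_height h J s i = restrict_height h J s j + 1 \<or>
          restrict_height h J s j = restrict_height h J s i + 1"
      if "{i, j} \<in> restrict_edges E J" for i j
      using that above shrub_edge_height[OF shrub, of i j]
      unfolding restrict_edges_def restrict_height_def by fastforce
    show "children (restrict_edges E J) (restrict_height h J s) a \<noteq> {}"
      if "a \<in> J" "0 < restrict_height h J s a" for a
      using that \<open>J \<subseteq> I\<close> shrub_children_nonempty[OF shrub, of a]
      by (auto simp: children restrict_height_def)
    show "children (restrict_edges E J) (restrict_height h J s) b =
          children (restrict_edges E J) (restrict_height h J s) c"
      if "covers (restrict_edges E J) (restrict_height h J s) a b"
         "covers (restrict_edges E J) (restrict_height h J s) a c" for a b c
    proof -
      from that have ab: "covers E h a b" and ac: "covers E h a c" and "a \<in> J" "s < h a"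
        by (simp_all add: covers)
      with closed have "b \<in> J" "c \<in> J"
        by blast+
      moreover have "h b = h c"
        using covers_height[OF ab] covers_height[OF ac] by simp
      ultimately show ?thesis
        using shrub_siblings[OF shrub ab ac] by (simp add: children)
    qed
    show "children (restrict_edges E J) (restrict_height h J s) a \<subseteq>
            children (restrict_edges E J) (restrict_height h J s) b \<or>
          children (restrict_edges E J) (restrict_height h J s) b \<subseteq>
            children (restrict_edges E J) (restrict_height h J s) a"
      if "covers (restrict_edges E J) (restrict_height h J s) a d"
         "covers (restrict_edges E J) (restrict_height h J s) b d" for a b d
    proof -
      from that have ad: "covers E h a d" and bd: "covers E h b d"
        and "a \<in> J" "b \<in> J" "s < h a" "s < h b"
        by (simp_all add: covers)
      with shrub_children_nested[OF shrub ad bd] show ?thesis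
        by (simp add: children)
    qed
  qed
qed

lemma shrub_decompose_union:
  assumes shrub: "is_shrub I E h" and closed: "edge_closed E J" and "J \<subseteq> I"
  shows "E = restrict_edges E J \<union> restrict_edges E (I - J)"
    and "h = (\<lambda>i. if i \<in> I - J then restrict_height h (I - J) 0 i else restrict_height h J 0 i)"
proof -
  show "E = restrict_edges E J \<union> restrict_edges E (I - J)"
  proof
    show "E \<subseteq> restrict_edges E J \<union> restrict_edges E (I - J)"
    proof
      fix e
      assume "e \<in> E"
      then obtain i j where e: "e = {i, j}" "i \<in> I" "j \<in> I"
        by (rule shrub_edgeE[OF shrub])
      with \<open>e \<in> E\<close> have "{i, j} \<in> E" "{j, i} \<in> E"
        by (simp_all add: insert_commute)
      then have "i \<in> J \<longleftrightarrow> j \<in> J"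
        using edge_closedD[OF closed] by blast
      with e \<open>e \<in> E\<close> show "e \<in> restrict_edges E J \<union> restrict_edges E (I - J)"
        by (auto simp: restrict_edges_def)
    qed
  qed (auto simp: restrict_edges_def)
  show "h = (\<lambda>i. if i \<in> I - J then restrict_height h (I - J) 0 i else restrict_height h J 0 i)"
    using \<open>J \<subseteq> I\<close> shrub_height_outside[OF shrub] by (auto simp: fun_eq_iff restrict_height_def)
qed

lemma shrub_disconnectedE:
  assumes shrub: "is_shrub I E h" and "\<not> edge_connected I E"
  obtains J where "edge_closed E J" "J \<subseteq> I" "J \<noteq> {}" "J \<noteq> I"
proof -
  from assms(2) obtain J where J: "edge_closed E J" "J \<inter> I \<noteq> {}" "\<not> I \<subseteq> J"
    unfolding edge_connected_def by blast
  have "edge_closed E (J \<inter> I)"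
    using edge_closedD[OF J(1)] shrub_edge_in[OF shrub] unfolding edge_closed_def by blast
  with J that[of "J \<inter> I"] show ?thesis
    by blast
qed

lemma shrub_singleton:
  assumes "is_shrub {a} E h"
  shows "E = {} \<and> h = (\<lambda>_. 0)"
proof
  show "E = {}"
  proof (rule equals0I)
    fix e
    assume "e \<in> E"
    then show False
      by (rule shrub_edgeE[OF assms]) simp
  qed
  have "h a = 0"
    using shrub_roots_nonempty[OF assms] by (auto simp: roots_def)
  with shrub_height_outside[OF assms] show "h = (\<lambda>_. 0)"
    by (metis singletonD)
qed

section \<open>Disjoint union and grafting of shrubs\<close>

text \<open>With \<open>S\<^sub>i = (E\<^sub>i, h\<^sub>i)\<close>, the pairs \<open>(E1 \<union> E2, union_height)\<close> and
  \<open>(graft_edges, graft_height)\<close> are the compositions \<open>[1][2] \<circ> (S\<^sub>1, S\<^sub>2)\<close> and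
  \<open>[1 \<triangleleft> 2] \<circ> (S\<^sub>1, S\<^sub>2)\<close> in Arb.\<close>

locale shrub_pair =
  fixes I1 E1 h1 I2 E2 h2
  assumes shrub1: "is_shrub I1 E1 h1" and shrub2: "is_shrub I2 E2 h2"
    and disjoint: "I1 \<inter> I2 = {}"
begin

abbreviation union_height :: "'a \<Rightarrow> nat" where
  "union_height \<equiv> \<lambda>i. if i \<in> I2 then h2 i else h1 i"

abbreviation graft_edges :: "'a set set" where
  "graft_edges \<equiv> E1 \<union> E2 \<union> complete_bipartite (roots I2 h2) (roots I1 h1)"

abbreviation graft_height :: "'a \<Rightarrow> nat" where
  "graft_height \<equiv> \<lambda>i. if i \<in> I2 then h2 i + 1 else h1 i"

lemma children_union:
  "children (E1 \<union> E2) union_height a = (if a \<in> I2 then children E2 h2 a else children E1 h1 a)"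
  using disjoint
  by (auto simp: children_def covers_def dest: shrub_edge_in[OF shrub1] shrub_edge_in[OF shrub2])

lemma shrub_union: "is_shrub (I1 \<union> I2) (E1 \<union> E2) union_height"
proof -
  have same_part: "a \<in> I2 \<longleftrightarrow> b \<in> I2" if "covers (E1 \<union> E2) union_height a b" for a b
    using that disjoint shrub_children_subset[OF shrub1] shrub_children_subset[OF shrub2]
    unfolding covers_iff_children children_union by (auto split: if_splits) blast+
  show ?thesis
  proof (rule is_shrubI)
    show "\<exists>i j. e = {i, j} \<and> i \<noteq> j \<and> i \<in> I1 \<union> I2 \<and> j \<in> I1 \<union> I2" if "e \<in> E1 \<union> E2" for e
      using that shrub_edge[OF shrub1] shrub_edge[OF shrub2] by blast
    show "union_height z = 0" if "z \<notin> I1 \<union> I2" for z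
      using that shrub_height_outside[OF shrub1] shrub_height_outside[OF shrub2] by simp
    show "union_height i = union_height j + 1 \<or> union_height j = union_height i + 1"
      if "{i, j} \<in> E1 \<union> E2" for i j
      using that disjoint shrub_edge_in[OF shrub1] shrub_edge_in[OF shrub2]
        shrub_edge_height[OF shrub1] shrub_edge_height[OF shrub2] by fastforce
    show "children (E1 \<union> E2) union_height a \<noteq> {}" if "a \<in> I1 \<union> I2" "0 < union_height a" for a
      using that shrub_children_nonempty[OF shrub1] shrub_children_nonempty[OF shrub2]
      unfolding children_union by auto
    show "children (E1 \<union> E2) union_height b = children (E1 \<union> E2) union_height c"
      if "covers (E1 \<union> E2) union_height a b" "covers (E1 \<union> E2) union_height a c" for a b c
      using that same_part[OF that(1)] same_part[OF that(2)]
        shrub_siblings[OF shrub1, of a b c] shrub_siblings[OF shrub2, of a b c]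
      unfolding covers_iff_children children_union by auto
    show "children (E1 \<union> E2) union_height a \<subseteq> children (E1 \<union> E2) union_height b \<or>
          children (E1 \<union> E2) union_height b \<subseteq> children (E1 \<union> E2) union_height a"
      if "covers (E1 \<union> E2) union_height a d" "covers (E1 \<union> E2) union_height b d" for a b d
      using that same_part[OF that(1)] same_part[OF that(2)]
        shrub_children_nested[OF shrub1, of a d b] shrub_children_nested[OF shrub2, of a d b]
      unfolding covers_iff_children children_union by auto
  qed
qed

lemma edge_closed_union: "edge_closed (E1 \<union> E2) I1"
  unfolding edge_closed_def
proof (intro allI impI)
  fix i j
  assume "{i, j} \<in> E1 \<union> E2" "i \<in> I1"
  then consider "{i, j} \<in> E1" | "{i, j} \<in> E2"
    by blast
  then show "j \<in> I1"
  proof cases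
    case 2
    with shrub_edge_in[OF shrub2] \<open>i \<in> I1\<close> disjoint show ?thesis
      by blast
  qed (use shrub_edge_in[OF shrub1] in blast)
qed

lemma union_no_full_vertex:
  assumes "I1 \<noteq> {}" "I2 \<noteq> {}"
  shows "\<not> roots (I1 \<union> I2) union_height \<subseteq> children (E1 \<union> E2) union_height u"
proof
  assume full: "roots (I1 \<union> I2) union_height \<subseteq> children (E1 \<union> E2) union_height u"
  obtain r1 r2 where "r1 \<in> roots I1 h1" "r2 \<in> roots I2 h2"
    using shrub_roots_nonempty[OF shrub1 assms(1)] shrub_roots_nonempty[OF shrub2 assms(2)] by blast
  moreover have "roots (I1 \<union> I2) union_height = roots I1 h1 \<union> roots I2 h2"
    using disjoint by (rule roots_union)
  ultimately have "r1 \<in> children (E1 \<union> E2) union_height u" "r2 \<in> children (E1 \<union> E2) union_height u"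
    using full by blast+
  with shrub_children_subset[OF shrub1] shrub_children_subset[OF shrub2] disjoint
    \<open>r1 \<in> roots I1 h1\<close> \<open>r2 \<in> roots I2 h2\<close>
  show False
    unfolding children_union roots_def by (auto split: if_splits) blast+
qed

lemma children_graft:
  "children graft_edges graft_height a =
     (if a \<in> I2 then if h2 a = 0 then roots I1 h1 else children E2 h2 a else children E1 h1 a)"
  using disjoint
  by (auto simp: children_def covers_def complete_bipartite_def roots_def doubleton_eq_iff
      dest: shrub_edge_in[OF shrub1] shrub_edge_in[OF shrub2])

lemma graft_siblings:
  assumes "covers graft_edges graft_height a b" "covers graft_edges graft_height a c"
  shows "children graft_edges graft_height b = children graft_edges graft_height c"
proof -
  consider (bottom) "a \<in> I2" "h2 a = 0" | (top) "a \<in> I2" "h2 a \<noteq> 0" | (lower) "a \<notin> I2"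
    by blast
  then show ?thesis
  proof cases
    case bottom
    with assms have "b \<in> roots I1 h1" "c \<in> roots I1 h1"
      by (simp_all add: covers_iff_children children_graft)
    with disjoint have "b \<notin> I2" "c \<notin> I2" "h1 b = 0" "h1 c = 0"
      by (auto simp: roots_def)
    then show ?thesis
      by (simp add: children_graft children_height_zero)
  next
    case top
    with assms have bc: "covers E2 h2 a b" "covers E2 h2 a c"
      by (simp_all add: covers_iff_children children_graft)
    then have "b \<in> I2" "c \<in> I2" "h2 b = h2 c"
      using shrub_covers_in[OF shrub2] covers_height by (metis Suc_inject)+
    with shrub_siblings[OF shrub2 bc] show ?thesis
      by (simp add: children_graft)
  next
    case lower
    with assms have bc: "covers E1 h1 a b" "covers E1 h1 a c"
      by (simp_all add: covers_iff_children children_graft)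
    then have "b \<notin> I2" "c \<notin> I2"
      using shrub_covers_in[OF shrub1] disjoint by blast+
    with shrub_siblings[OF shrub1 bc] show ?thesis
      by (simp add: children_graft)
  qed
qed

lemma graft_nested:
  assumes "covers graft_edges graft_height a d" "covers graft_edges graft_height b d"
  shows "children graft_edges graft_height a \<subseteq> children graft_edges graft_height b \<or>
         children graft_edges graft_height b \<subseteq> children graft_edges graft_height a"
proof (cases "d \<in> I2")
  case True
  have "a \<in> I2 \<and> h2 a \<noteq> 0 \<and> covers E2 h2 a d" if "covers graft_edges graft_height a d" for a
    using that True disjoint shrub_children_subset[OF shrub1]
    unfolding covers_iff_children children_graft by (auto simp: roots_def split: if_splits)
  with assms have "a \<in> I2" "b \<in> I2" "h2 a \<noteq> 0" "h2 b \<noteq> 0" "covers E2 h2 a d" "covers E2 h2 b d"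
    by blast+
  with shrub_children_nested[OF shrub2, of a d b] show ?thesis
    by (simp add: children_graft)
next
  case False
  have parent: "if a \<in> I2 then children graft_edges graft_height a = roots I1 h1 \<and> h1 d = 0
      else covers E1 h1 a d \<and> children graft_edges graft_height a = children E1 h1 a"
    if "covers graft_edges graft_height a d" for a
    using that False shrub_children_subset[OF shrub2]
    unfolding covers_iff_children children_graft by (auto simp: roots_def split: if_splits)
  have "children E1 h1 a \<subseteq> roots I1 h1" if "covers E1 h1 a d" "h1 d = 0" for a
    using children_level[OF shrub1 that(1)] that(2) by (simp add: roots_def)
  with parent[OF assms(1)] parent[OF assms(2)] shrub_children_nested[OF shrub1, of a d b]
  show ?thesis
    by (auto split: if_splits)
qed

lemma shrub_graft:
  assumes "I1 \<noteq> {}"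
  shows "is_shrub (I1 \<union> I2) graft_edges graft_height"
proof (rule is_shrubI)
  show "\<exists>i j. e = {i, j} \<and> i \<noteq> j \<and> i \<in> I1 \<union> I2 \<and> j \<in> I1 \<union> I2" if "e \<in> graft_edges" for e
    using that disjoint shrub_edge[OF shrub1] shrub_edge[OF shrub2]
    unfolding complete_bipartite_def roots_def by blast
  show "graft_height z = 0" if "z \<notin> I1 \<union> I2" for z
    using that shrub_height_outside[OF shrub1] shrub_height_outside[OF shrub2] by simp
  show "graft_height i = graft_height j + 1 \<or> graft_height j = graft_height i + 1"
    if "{i, j} \<in> graft_edges" for i j
    using that disjoint shrub_edge_in[OF shrub1] shrub_edge_in[OF shrub2]
      shrub_edge_height[OF shrub1] shrub_edge_height[OF shrub2]
    unfolding complete_bipartite_def roots_def by (fastforce simp: doubleton_eq_iff)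
  show "children graft_edges graft_height a \<noteq> {}" if "a \<in> I1 \<union> I2" "0 < graft_height a" for a
    using that shrub_roots_nonempty[OF shrub1 assms]
      shrub_children_nonempty[OF shrub1] shrub_children_nonempty[OF shrub2]
    unfolding children_graft by auto
qed (fact graft_siblings graft_nested)+

end

section \<open>Connected shrubs and the upper part\<close>

lemma shrub_edge_closed_low_descendants:
  assumes shrub: "is_shrub I E h"
    and absorb: "\<And>y d. h y = 1 \<Longrightarrow> covers E h y d \<Longrightarrow> d \<in> M \<Longrightarrow> children E h y \<subseteq> M"
  shows "edge_closed E {v \<in> I. \<forall>u. (covers E h)\<^sup>*\<^sup>* v u \<longrightarrow> h u = 0 \<longrightarrow> u \<in> M}"
    (is "edge_closed E ?J")
  unfolding edge_closed_def
proof (intro allI impI)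
  fix i j
  assume ij: "{i, j} \<in> E" and "i \<in> ?J"
  then have "j \<in> I"
    using shrub_edge_in[OF shrub] by blast
  from shrub_edge_height[OF shrub ij] show "j \<in> ?J"
  proof
    assume "h i = Suc (h j)"
    with ij have "covers E h i j"
      by (simp add: covers_iff_edge)
    then have "(covers E h)\<^sup>*\<^sup>* i u" if "(covers E h)\<^sup>*\<^sup>* j u" for u
      using that by (rule converse_rtranclp_into_rtranclp)
    with \<open>i \<in> ?J\<close> \<open>j \<in> I\<close> show "j \<in> ?J"
      by blast
  next
    assume "h j = Suc (h i)"
    with ij have ji: "covers E h j i"
      by (simp add: covers_iff_edge insert_commute)
    have "u \<in> M" if "(covers E h)\<^sup>*\<^sup>* j u" "h u = 0" for u
      using that(1)
    proof (cases rule: converse_rtranclpE)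
      case base
      with that(2) \<open>h j = Suc (h i)\<close> show ?thesis by simp
    next
      case (step c)
      from shrub_descends_sibling[OF shrub ji step] show ?thesis
      proof
        assume "u = c"
        with that(2) step(1) ji have "h i = 0" "h j = 1" "c \<in> children E h j"
          using covers_height[OF step(1)] covers_height[OF ji]
          by (simp_all add: covers_iff_children)
        moreover have "i \<in> M"
          using \<open>i \<in> ?J\<close> \<open>h i = 0\<close> by blast
        ultimately show ?thesis
          using absorb[OF _ ji] \<open>u = c\<close> by blast
      qed (use \<open>i \<in> ?J\<close> that(2) in simp)
    qed
    with \<open>j \<in> I\<close> show "j \<in> ?J"
      by blast
  qed
qed

text \<open>A height-1 vertex with a maximal set of children absorbs every set of children it
  meets (axiom (4)), so by connectivity its children are all the roots.\<close>

lemma connected_shrub_full_vertex: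
  assumes shrub: "is_shrub I E h" and "finite I" and connected: "edge_connected I E"
    and "v \<in> I" "0 < h v"
  obtains u where "u \<in> I" "h u = 1" "roots I h \<subseteq> children E h u"
proof -
  define H1 where "H1 = {y \<in> I. h y = 1}"
  obtain w where "(covers E h)\<^sup>*\<^sup>* v w" "h w = 1"
    using shrub_descendant_at_height[OF shrub \<open>v \<in> I\<close>, of 1] \<open>0 < h v\<close> by auto
  with shrub_descends_in[OF shrub] \<open>v \<in> I\<close> have "w \<in> H1"
    unfolding H1_def by blast
  moreover have "finite (children E h ` H1)"
    using \<open>finite I\<close> by (simp add: H1_def)
  ultimately have "\<exists>u0\<in>H1. \<forall>y\<in>H1.
      children E h u0 \<subseteq> children E h y \<longrightarrow> children E h u0 = children E h y"
    using finite_has_maximal[of "children E h ` H1"] by auto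
  then obtain u0 where u0: "u0 \<in> I" "h u0 = 1"
    and maximal: "\<And>y. y \<in> H1 \<Longrightarrow> children E h u0 \<subseteq> children E h y \<Longrightarrow> children E h u0 = children E h y"
    unfolding H1_def by blast
  define M where "M = children E h u0"
  have "children E h y \<subseteq> M" if "h y = 1" "covers E h y d" "d \<in> M" for y d
  proof -
    have "covers E h u0 d" "y \<in> H1"
      using that shrub_covers_in[OF shrub] by (simp_all add: M_def covers_iff_children H1_def)
    from shrub_children_nested[OF shrub that(2) this(1)] maximal[OF this(2)] show ?thesis
      by (auto simp: M_def)
  qed
  then have closed: "edge_closed E {v \<in> I. \<forall>u. (covers E h)\<^sup>*\<^sup>* v u \<longrightarrow> h u = 0 \<longrightarrow> u \<in> M}"
    by (rule shrub_edge_closed_low_descendants[OF shrub])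
  have "\<forall>u. (covers E h)\<^sup>*\<^sup>* u0 u \<longrightarrow> h u = 0 \<longrightarrow> u \<in> M"
    using descends_from_height_one u0(2) by (auto simp: M_def covers_iff_children)
  with closed connected u0(1) have "I \<subseteq> {v \<in> I. \<forall>u. (covers E h)\<^sup>*\<^sup>* v u \<longrightarrow> h u = 0 \<longrightarrow> u \<in> M}"
    unfolding edge_connected_def by blast
  then have "roots I h \<subseteq> M"
    unfolding roots_def by blast
  with u0 show ?thesis
    by (intro that[of u0]) (simp_all add: M_def)
qed

text \<open>For a connected shrub on at least two vertices, the upper part \<open>Y\<close> is the second
  argument of its decomposition \<open>[B \<triangleleft> Y]\<close>.\<close>

definition upper :: "'a set \<Rightarrow> 'a set set \<Rightarrow> ('a \<Rightarrow> nat) \<Rightarrow> 'a set" where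
  "upper I E h = {v \<in> I. 0 < h v \<and>
     (\<forall>u. (covers E h)\<^sup>*\<^sup>* v u \<longrightarrow> h u = 1 \<longrightarrow> roots I h \<subseteq> children E h u)}"

context
  fixes I E h
  assumes shrub: "is_shrub I E h"
begin

lemma upper_covers:
  assumes "v \<in> upper I E h" "1 < h v" "covers E h v w"
  shows "w \<in> upper I E h"
proof -
  have "w \<in> I" "0 < h w"
    using shrub_covers_in[OF shrub assms(3)] covers_height[OF assms(3)] assms(2) by auto
  moreover have "(covers E h)\<^sup>*\<^sup>* v u" if "(covers E h)\<^sup>*\<^sup>* w u" for u
    using assms(3) that by (rule converse_rtranclp_into_rtranclp)
  ultimately show ?thesis
    using assms(1) unfolding upper_def by blast
qed

lemma upper_covered:
  assumes vw: "covers E h v w" and "w \<in> upper I E h"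
  shows "v \<in> upper I E h"
proof -
  have w: "0 < h w" "\<And>u. (covers E h)\<^sup>*\<^sup>* w u \<Longrightarrow> h u = 1 \<Longrightarrow> roots I h \<subseteq> children E h u"
    using assms(2) unfolding upper_def by blast+
  have "roots I h \<subseteq> children E h u" if "(covers E h)\<^sup>*\<^sup>* v u" "h u = 1" for u
    using that(1)
  proof (cases rule: converse_rtranclpE)
    case base
    with that(2) w(1) covers_height[OF vw] show ?thesis by simp
  next
    case (step c)
    from shrub_descends_sibling[OF shrub vw step] show ?thesis
    proof
      assume "u = c"
      with that(2) covers_height[OF vw] covers_height[OF step(1)] have "h w = 1"
        by simp
      with w(2)[of w] shrub_siblings[OF shrub vw step(1)] \<open>u = c\<close> show ?thesis
        by simp
    qed (use w(2) that(2) in blast)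
  qed
  with shrub_covers_in[OF shrub vw] covers_height[OF vw] show ?thesis
    unfolding upper_def by simp
qed

lemma upper_lower_edge:
  assumes "{y, b} \<in> E" "y \<in> upper I E h" "b \<notin> upper I E h"
  shows "h y = 1 \<and> h b = 0"
  using shrub_edge_height[OF shrub assms(1)]
proof
  assume "h y = Suc (h b)"
  with assms(1) have "covers E h y b"
    by (simp add: covers_iff_edge)
  with assms(2,3) upper_covers have "h y \<le> 1"
    by fastforce
  with \<open>h y = Suc (h b)\<close> show ?thesis
    by simp
next
  assume "h b = Suc (h y)"
  with assms(1) have "covers E h b y"
    by (simp add: covers_iff_edge insert_commute)
  with assms(2,3) upper_covered show ?thesis
    by blast
qed

lemma roots_restrict_upper:
  "roots (upper I E h) (restrict_height h (upper I E h) 1) = {y \<in> upper I E h. h y = 1}"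
  by (auto simp: roots_def restrict_height_def upper_def)

lemma roots_restrict_lower:
  "roots (I - upper I E h) (restrict_height h (I - upper I E h) 0) = roots I h"
  by (auto simp: roots_def restrict_height_def upper_def)

lemma upper_full:
  assumes "y \<in> upper I E h" "h y = 1" "r \<in> roots I h"
  shows "{y, r} \<in> E"
proof -
  from assms have "covers E h y r"
    unfolding upper_def covers_iff_children by blast
  then show ?thesis
    by (simp add: covers_def insert_commute)
qed

lemma shrub_decompose_graft:
  defines "Y \<equiv> upper I E h" and "B \<equiv> I - upper I E h"
  shows "E = restrict_edges E B \<union> restrict_edges E Y \<union>
      complete_bipartite (roots Y (restrict_height h Y 1)) (roots B (restrict_height h B 0))"
    and "h = (\<lambda>i. if i \<in> Y then restrict_height h Y 1 i + 1 else restrict_height h B 0 i)"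
proof -
  have Y: "Y \<subseteq> I" "\<And>y. y \<in> Y \<Longrightarrow> 0 < h y" and B: "B = I - Y"
    by (auto simp: Y_def B_def upper_def)
  let ?cross = "complete_bipartite {y \<in> Y. h y = 1} (roots I h)"
  have "E \<subseteq> restrict_edges E B \<union> restrict_edges E Y \<union> ?cross"
  proof
    fix e
    assume "e \<in> E"
    then obtain i j where e: "e = {i, j}" "i \<in> I" "j \<in> I"
      by (rule shrub_edgeE[OF shrub])
    with \<open>e \<in> E\<close> have "{i, j} \<in> E" "{j, i} \<in> E"
      by (simp_all add: insert_commute)
    with upper_lower_edge e have "i \<in> Y \<Longrightarrow> j \<in> B \<Longrightarrow> h i = 1 \<and> h j = 0"
      "j \<in> Y \<Longrightarrow> i \<in> B \<Longrightarrow> h j = 1 \<and> h i = 0"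
      by (auto simp: Y_def B_def)
    with e \<open>e \<in> E\<close> show "e \<in> restrict_edges E B \<union> restrict_edges E Y \<union> ?cross"
      by (auto simp: restrict_edges_def complete_bipartite_def roots_def B insert_commute)
  qed
  moreover have "?cross \<subseteq> E"
    using upper_full by (auto simp: complete_bipartite_def Y_def)
  ultimately show "E = restrict_edges E B \<union> restrict_edges E Y \<union>
      complete_bipartite (roots Y (restrict_height h Y 1)) (roots B (restrict_height h B 0))"
    unfolding B_def Y_def roots_restrict_upper roots_restrict_lower
    by (auto simp: restrict_edges_def)
  show "h = (\<lambda>i. if i \<in> Y then restrict_height h Y 1 i + 1 else restrict_height h B 0 i)"
    using Y shrub_height_outside[OF shrub] by (auto simp: fun_eq_iff restrict_height_def B)
qed

end

lemma connected_shrub_upper_nonempty: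
  assumes shrub: "is_shrub I E h" and "finite I" and connected: "edge_connected I E"
    and "a \<in> I" "I \<noteq> {a}"
  shows "upper I E h \<noteq> {}"
proof -
  have "\<exists>v\<in>I. 0 < h v"
  proof (rule ccontr)
    assume "\<not> (\<exists>v\<in>I. 0 < h v)"
    then have "edge_closed E {a}"
      using shrub_edge_in[OF shrub] shrub_edge_height[OF shrub]
      unfolding edge_closed_def by fastforce
    with connected \<open>a \<in> I\<close> have "I \<subseteq> {a}"
      unfolding edge_connected_def by blast
    with assms(4,5) show False
      by blast
  qed
  then obtain u where "u \<in> I" "h u = 1" "roots I h \<subseteq> children E h u"
    using connected_shrub_full_vertex[OF shrub \<open>finite I\<close> connected] by blast
  then have "u \<in> upper I E h"
    unfolding upper_def using descends_height[of E h u] by fastforce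
  then show ?thesis
    by blast
qed

section \<open>Soundness\<close>

lemma phi_is_shrub: "linear t \<Longrightarrow> is_shrub (leaves t) (phi_edges t) (phi_height t)"
proof (induction t)
  case (Leaf a)
  show ?case
    by (rule is_shrubI) (auto simp: children_def covers_def)
next
  case (C x y)
  then show ?case
    using shrub_pair.shrub_union[of "leaves x" "phi_edges x" "phi_height x"]
    by (simp add: shrub_pair_def)
next
  case (D x y)
  then show ?case
    using shrub_pair.shrub_graft[of "leaves x" "phi_edges x" "phi_height x"]
    by (simp add: shrub_pair_def)
qed

lemma phi_C_commute: "linear (C x y) \<Longrightarrow> phi (C x y) = phi (C y x)"
  by (auto simp: prod_eq_iff fun_eq_iff phi_height_outside)

lemma phi_C_rotate: "linear (C (C x y) z) \<Longrightarrow> phi (C (C x y) z) = phi (C (C y z) x)"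
  by (auto simp: prod_eq_iff fun_eq_iff phi_height_outside)

lemma phi_D_exchange:
  assumes "linear (D (D x y) z)"
  shows "phi (D (D x y) z) = phi (D (D x z) y)"
proof -
  have "leaves x \<inter> leaves y = {}" "leaves x \<inter> leaves z = {}" "leaves y \<inter> leaves z = {}"
    using assms by auto
  then show ?thesis
    by (auto simp: prod_eq_iff fun_eq_iff phi_height_outside roots_graft)
qed

lemma phi_D_merge:
  assumes "linear (D (D x y) z)"
  shows "phi (D (D x y) z) = phi (D x (C z y))"
proof -
  have "leaves x \<inter> leaves y = {}" "leaves x \<inter> leaves z = {}" "leaves z \<inter> leaves y = {}"
    using assms by auto
  then show ?thesis
    by (auto simp: prod_eq_iff fun_eq_iff phi_height_outside roots_graft roots_union
        complete_bipartite_Un1)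
qed

lemma eqA_invariants:
  "eqA s t \<Longrightarrow> leaves s = leaves t \<and> (linear s \<longleftrightarrow> linear t) \<and> (linear s \<longrightarrow> phi s = phi t)"
proof (induction rule: eqA.induct)
  case (eq_Csym x y)
  then show ?case using phi_C_commute[of x y] by auto
next
  case (eq_rel1 x y z)
  then show ?case using phi_D_exchange[of x y z] by auto
next
  case (eq_rel2 x y z)
  then show ?case using phi_D_merge[of x y z] by auto
next
  case (eq_rel3 x y z)
  then show ?case using phi_C_rotate[of x y z] by auto
qed (auto simp: prod_eq_iff)

section \<open>Surjectivity\<close>

lemma phi_C_of_restrictions:
  assumes shrub: "is_shrub I E h" and "edge_closed E J" "J \<subseteq> I"
    and "phi x = (restrict_edges E J, restrict_height h J 0)"
    and "leaves y = I - J" "phi y = (restrict_edges E (I - J), restrict_height h (I - J) 0)"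
  shows "phi (C x y) = (E, h)"
proof (rule prod_eqI)
  from assms(4,6) have "phi_edges x = restrict_edges E J" "phi_height x = restrict_height h J 0"
    "phi_edges y = restrict_edges E (I - J)" "phi_height y = restrict_height h (I - J) 0"
    by simp_all
  with assms(5) have "phi_edges (C x y) = restrict_edges E J \<union> restrict_edges E (I - J)"
    "phi_height (C x y) =
      (\<lambda>i. if i \<in> I - J then restrict_height h (I - J) 0 i else restrict_height h J 0 i)"
    by (simp_all only: phi_C)
  then show "phi_edges (C x y) = fst (E, h)" "phi_height (C x y) = snd (E, h)"
    using shrub_decompose_union[OF shrub assms(2,3)] by simp_all
qed

lemma phi_D_of_restrictions:
  assumes shrub: "is_shrub I E h"
    and "leaves x = I - upper I E h"
      "phi x = (restrict_edges E (I - upper I E h), restrict_height h (I - upper I E h) 0)"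
    and "leaves y = upper I E h"
      "phi y = (restrict_edges E (upper I E h), restrict_height h (upper I E h) 1)"
  shows "phi (D x y) = (E, h)"
proof (rule prod_eqI)
  let ?Y = "upper I E h"
  from assms(3,5) have "phi_edges x = restrict_edges E (I - ?Y)"
    "phi_height x = restrict_height h (I - ?Y) 0"
    "phi_edges y = restrict_edges E ?Y" "phi_height y = restrict_height h ?Y 1"
    by simp_all
  with assms(2,4) have "phi_edges (D x y) = restrict_edges E (I - ?Y) \<union> restrict_edges E ?Y \<union>
      complete_bipartite (roots ?Y (restrict_height h ?Y 1))
        (roots (I - ?Y) (restrict_height h (I - ?Y) 0))"
    "phi_height (D x y) =
      (\<lambda>i. if i \<in> ?Y then restrict_height h ?Y 1 i + 1 else restrict_height h (I - ?Y) 0 i)"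
    by (simp_all only: phi_D)
  then show "phi_edges (D x y) = fst (E, h)" "phi_height (D x y) = snd (E, h)"
    using shrub_decompose_graft[OF shrub] by simp_all
qed

definition represented :: "'a set \<Rightarrow> 'a set set \<Rightarrow> ('a \<Rightarrow> nat) \<Rightarrow> bool" where
  "represented I E h \<longleftrightarrow> (\<exists>t. linear t \<and> leaves t = I \<and> phi t = (E, h))"

lemma represented_disconnected:
  assumes shrub: "is_shrub I E h" and "\<not> edge_connected I E"
    and restriction: "\<And>J. J \<subset> I \<Longrightarrow> J \<noteq> {} \<Longrightarrow> (\<And>a b. a \<in> J \<Longrightarrow> covers E h a b \<Longrightarrow> b \<in> J) \<Longrightarrow>
      represented J (restrict_edges E J) (restrict_height h J 0)"
  shows "represented I E h"
proof -
  obtain J where J: "edge_closed E J" "J \<subseteq> I" "J \<noteq> {}" "J \<noteq> I"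
    using shrub_disconnectedE[OF shrub assms(2)] by blast
  have "b \<in> I - J" if "a \<in> I - J" "covers E h a b" for a b
  proof -
    from that(2) have "{b, a} \<in> E"
      by (simp add: covers_def)
    with that(1) edge_closedD[OF J(1)] shrub_covers_in[OF shrub that(2)] show ?thesis
      by blast
  qed
  moreover from J have "J \<subset> I" "I - J \<subset> I" "I - J \<noteq> {}"
    by blast+
  ultimately obtain x y where
    "linear x" "leaves x = J" "phi x = (restrict_edges E J, restrict_height h J 0)"
    "linear y" "leaves y = I - J" "phi y = (restrict_edges E (I - J), restrict_height h (I - J) 0)"
    using restriction[of J] restriction[of "I - J"] J(3) edge_closed_covers[OF J(1)]
    unfolding represented_def by metis
  with J phi_C_of_restrictions[OF shrub] show ?thesis
    unfolding represented_def by (intro exI[of _ "C x y"]) auto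
qed

lemma represented_connected:
  assumes shrub: "is_shrub I E h" and "finite I" "edge_connected I E" "a \<in> I" "I \<noteq> {a}"
    and restriction: "\<And>J s. J \<subset> I \<Longrightarrow> J \<noteq> {} \<Longrightarrow> (\<And>v. v \<in> J \<Longrightarrow> s \<le> h v) \<Longrightarrow>
      (\<And>a b. a \<in> J \<Longrightarrow> s < h a \<Longrightarrow> covers E h a b \<Longrightarrow> b \<in> J) \<Longrightarrow>
      represented J (restrict_edges E J) (restrict_height h J s)"
  shows "represented I E h"
proof -
  define Y where "Y = upper I E h"
  have "Y \<subseteq> I" and Y_pos: "\<And>v. v \<in> Y \<Longrightarrow> 1 \<le> h v"
    by (auto simp: Y_def upper_def)
  moreover have "Y \<noteq> {}"
    using connected_shrub_upper_nonempty[OF shrub assms(2-5)] by (simp add: Y_def)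
  moreover have "I - Y \<noteq> {}"
  proof -
    from assms(4) have "I \<noteq> {}"
      by blast
    with shrub_roots_nonempty[OF shrub] show ?thesis
      by (auto simp: Y_def upper_def roots_def)
  qed
  ultimately have "Y \<subset> I" "I - Y \<subset> I"
    by blast+
  have "b \<in> Y" if "a \<in> Y" "1 < h a" "covers E h a b" for a b
    using that upper_covers[OF shrub] by (simp add: Y_def)
  with restriction[OF \<open>Y \<subset> I\<close> \<open>Y \<noteq> {}\<close> Y_pos] obtain y
    where y: "linear y" "leaves y = Y" "phi y = (restrict_edges E Y, restrict_height h Y 1)"
    unfolding represented_def by blast
  have "b \<in> I - Y" if "a \<in> I - Y" "covers E h a b" for a b
    using that upper_covered[OF shrub that(2)] shrub_covers_in[OF shrub that(2)]
    by (auto simp: Y_def)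
  with restriction[OF \<open>I - Y \<subset> I\<close> \<open>I - Y \<noteq> {}\<close>, of 0] obtain x
    where x: "linear x" "leaves x = I - Y"
      "phi x = (restrict_edges E (I - Y), restrict_height h (I - Y) 0)"
    unfolding represented_def by blast
  from x y \<open>Y \<subseteq> I\<close> phi_D_of_restrictions[OF shrub] show ?thesis
    unfolding represented_def by (intro exI[of _ "D x y"]) (auto simp: Y_def)
qed

lemma phi_surjective:
  assumes "finite I" "I \<noteq> {}" "is_shrub I E h"
  shows "represented I E h"
  using assms
proof (induction "card I" arbitrary: I E h rule: less_induct)
  case less
  note shrub = less.prems(3)
  have restriction: "represented J (restrict_edges E J) (restrict_height h J s)"
    if "J \<subset> I" "J \<noteq> {}" "\<And>v. v \<in> J \<Longrightarrow> s \<le> h v"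
      "\<And>a b. a \<in> J \<Longrightarrow> s < h a \<Longrightarrow> covers E h a b \<Longrightarrow> b \<in> J" for J s
  proof (rule less.hyps)
    show "card J < card I"
      by (rule psubset_card_mono[OF less.prems(1) that(1)])
    show "finite J"
      using that(1) less.prems(1) finite_subset by blast
    show "is_shrub J (restrict_edges E J) (restrict_height h J s)"
      using that(1) by (intro shrub_restrict[OF shrub _ that(3,4)]) auto
  qed (fact that(2))
  obtain a where "a \<in> I"
    using less.prems(2) by blast
  consider "I = {a}" | "\<not> edge_connected I E" | "edge_connected I E" "I \<noteq> {a}"
    by blast
  then show ?case
  proof cases
    case 1
    with shrub_singleton[of a E h] shrub have "E = {}" "h = (\<lambda>_. 0)"
      by simp_all
    with 1 show ?thesis
      unfolding represented_def by (intro exI[of _ "Leaf a"]) simp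
  next
    case 2
    show ?thesis
      by (rule represented_disconnected[OF shrub 2]) (use restriction in blast)
  next
    case 3
    show ?thesis
      by (rule represented_connected[OF shrub less.prems(1) 3(1) \<open>a \<in> I\<close> 3(2)])
        (use restriction in blast)
  qed
qed

section \<open>Injectivity\<close>

lemma phi_edge_subset: "linear t \<Longrightarrow> e \<in> phi_edges t \<Longrightarrow> e \<subseteq> leaves t \<and> e \<noteq> {}"
  by (erule shrub_edgeE[OF phi_is_shrub]) auto

lemma phi_C_restrict:
  assumes "linear (C x y)"
  shows "phi x = restrict_shrub (phi (C x y)) (leaves x) 0"
    and "phi y = restrict_shrub (phi (C x y)) (leaves y) 0"
proof -
  have "linear x" "linear y" "leaves x \<inter> leaves y = {}"
    using assms by auto
  with phi_edge_subset[of x] phi_edge_subset[of y]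
    phi_height_outside[of _ x] phi_height_outside[of _ y]
  show "phi x = restrict_shrub (phi (C x y)) (leaves x) 0"
    "phi y = restrict_shrub (phi (C x y)) (leaves y) 0"
    by (auto simp: prod_eq_iff restrict_edges_def restrict_height_def fun_eq_iff) blast+
qed

lemma phi_D_restrict:
  assumes "linear (D x y)"
  shows "phi x = restrict_shrub (phi (D x y)) (leaves x) 0"
    and "phi y = restrict_shrub (phi (D x y)) (leaves y) 1"
proof -
  have "linear x" "linear y" "leaves x \<inter> leaves y = {}"
    using assms by auto
  with phi_edge_subset[of x] phi_edge_subset[of y]
    phi_height_outside[of _ x] phi_height_outside[of _ y]
  show "phi x = restrict_shrub (phi (D x y)) (leaves x) 0"
    "phi y = restrict_shrub (phi (D x y)) (leaves y) 1"
    by (auto simp: prod_eq_iff restrict_edges_def restrict_height_def fun_eq_iff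
        complete_bipartite_def roots_def) blast+
qed

lemma phi_C_parts_eq:
  assumes "linear (C x y)" "linear (C x' y')" "phi (C x y) = phi (C x' y')"
    and "leaves x = leaves x'" "leaves y = leaves y'"
  shows "phi x = phi x'" "phi y = phi y'"
  by (simp_all only: phi_C_restrict[OF assms(1)] phi_C_restrict[OF assms(2)] assms(3-5))

lemma phi_D_parts_eq:
  assumes "linear (D x y)" "linear (D x' y')" "phi (D x y) = phi (D x' y')"
    and "leaves (D x y) = leaves (D x' y')" "leaves y = leaves y'"
  shows "phi x = phi x'" "phi y = phi y'"
proof -
  have "leaves x = leaves x'"
    using assms(1,2,4,5) by auto
  then show "phi x = phi x'" "phi y = phi y'"
    by (simp_all only: phi_D_restrict[OF assms(1)] phi_D_restrict[OF assms(2)] assms(3,5))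
qed

lemma phi_C_not_connected:
  assumes "linear (C x y)"
  shows "\<not> edge_connected (leaves (C x y)) (phi_edges (C x y))"
proof
  have "shrub_pair (leaves x) (phi_edges x) (phi_height x) (leaves y) (phi_edges y) (phi_height y)"
    using assms by (simp add: shrub_pair_def phi_is_shrub)
  then have "edge_closed (phi_edges (C x y)) (leaves x)"
    by (simp add: shrub_pair.edge_closed_union)
  moreover assume "edge_connected (leaves (C x y)) (phi_edges (C x y))"
  moreover have "leaves x \<inter> leaves (C x y) \<noteq> {}"
    by auto
  ultimately have "leaves y \<subseteq> leaves x"
    unfolding edge_connected_def by auto
  moreover have "leaves x \<inter> leaves y = {}"
    using assms by simp
  ultimately show False
    using leaves_nonempty[of y] by blast
qed

lemma phi_D_connected:
  assumes "linear (D x y)"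
  shows "edge_connected (leaves (D x y)) (phi_edges (D x y))"
  unfolding edge_connected_def
proof (intro allI impI)
  fix J
  assume closed: "edge_closed (phi_edges (D x y)) J" and "J \<inter> leaves (D x y) \<noteq> {}"
  have shrub: "is_shrub (leaves (D x y)) (phi_edges (D x y)) (phi_height (D x y))"
    using assms by (rule phi_is_shrub)
  have "leaves x \<inter> leaves y = {}" "linear y"
    using assms by simp_all
  then have roots: "roots (leaves (D x y)) (phi_height (D x y)) = roots (leaves x) (phi_height x)"
    by (simp add: roots_graft)
  obtain k where k: "k \<in> J" "k \<in> roots (leaves x) (phi_height x)"
    using shrub_edge_closed_roots(1)[OF shrub closed] \<open>J \<inter> leaves (D x y) \<noteq> {}\<close> roots by blast
  obtain q where q: "q \<in> roots (leaves y) (phi_height y)"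
    using shrub_roots_nonempty[OF phi_is_shrub[OF \<open>linear y\<close>] leaves_nonempty] by blast
  have edge: "{q, r} \<in> phi_edges (D x y)" if "r \<in> roots (leaves x) (phi_height x)" for r
    using q that unfolding phi_D complete_bipartite_def by blast
  have "q \<in> J"
    using edge_closedD[OF closed, of k q] edge[OF k(2)] k(1) by (simp add: insert_commute)
  then have "roots (leaves x) (phi_height x) \<subseteq> J"
    using edge_closedD[OF closed, of q] edge by blast
  with roots shrub_edge_closed_roots(2)[OF shrub closed] show "leaves (D x y) \<subseteq> J"
    by simp
qed

declare eq_trans [trans]

lemma eqA_C_cong: "eqA a a' \<Longrightarrow> eqA b b' \<Longrightarrow> eqA (C a b) (C a' b')"
  by (meson eq_C1 eq_C2 eq_trans)

lemma eqA_D_cong: "eqA a a' \<Longrightarrow> eqA b b' \<Longrightarrow> eqA (D a b) (D a' b')"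
  by (meson eq_D1 eq_D2 eq_trans)

lemma eqA_C_assoc: "eqA (C (C a b) c) (C a (C b c))"
  by (meson eq_rel3 eq_Csym eq_trans)

lemma eqA_C_left_commute: "eqA (C a (C b c)) (C b (C a c))"
  by (meson eqA_C_assoc eq_C1 eq_Csym eq_sym eq_trans)

lemma eqA_C_interchange: "eqA (C (C a b) (C c d)) (C (C a c) (C b d))"
  by (meson eqA_C_assoc eqA_C_left_commute eq_C2 eq_sym eq_trans)

definition C_split :: "'a tm \<Rightarrow> 'a set \<Rightarrow> bool" where
  "C_split t J \<longleftrightarrow> (\<exists>t1 t2. eqA t (C t1 t2) \<and> leaves t1 = leaves t \<inter> J \<and> leaves t2 = leaves t - J)"

lemma C_splitI:
  "eqA t (C t1 t2) \<Longrightarrow> leaves t1 = leaves t \<inter> J \<Longrightarrow> leaves t2 = leaves t - J \<Longrightarrow> C_split t J"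
  unfolding C_split_def by blast

lemma C_split_commute:
  assumes "C_split (C y x) J"
  shows "C_split (C x y) J"
proof -
  from assms obtain t1 t2 where "eqA (C y x) (C t1 t2)"
    "leaves t1 = leaves (C y x) \<inter> J" "leaves t2 = leaves (C y x) - J"
    unfolding C_split_def by blast
  moreover have "eqA (C x y) (C y x)" "leaves (C y x) = leaves (C x y)"
    by (auto intro: eq_Csym)
  ultimately show ?thesis
    by (metis C_splitI eq_trans)
qed

lemma C_split_inside_outside:
  "leaves x \<inter> leaves y = {} \<Longrightarrow> leaves x \<subseteq> J \<Longrightarrow> leaves y \<inter> J = {} \<Longrightarrow> C_split (C x y) J"
  by (rule C_splitI[OF eq_refl]) auto

lemma C_split_inside:
  assumes "leaves x \<subseteq> J" "C_split y J"
  shows "C_split (C x y) J"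
proof -
  from assms(2) obtain y1 y2
    where y: "eqA y (C y1 y2)" "leaves y1 = leaves y \<inter> J" "leaves y2 = leaves y - J"
    unfolding C_split_def by blast
  have "eqA (C x y) (C x (C y1 y2))"
    using y(1) by (rule eq_C2)
  also have "eqA \<dots> (C (C x y1) y2)"
    by (rule eq_sym[OF eqA_C_assoc])
  finally have "eqA (C x y) (C (C x y1) y2)" .
  then show ?thesis
    by (rule C_splitI) (use assms(1) y(2,3) in auto)
qed

lemma C_split_outside:
  assumes "leaves x \<inter> J = {}" "C_split y J"
  shows "C_split (C x y) J"
proof -
  from assms(2) obtain y1 y2
    where y: "eqA y (C y1 y2)" "leaves y1 = leaves y \<inter> J" "leaves y2 = leaves y - J"
    unfolding C_split_def by blast
  have "eqA (C x y) (C x (C y1 y2))"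
    using y(1) by (rule eq_C2)
  also have "eqA \<dots> (C y1 (C x y2))"
    by (rule eqA_C_left_commute)
  finally have "eqA (C x y) (C y1 (C x y2))" .
  then show ?thesis
    by (rule C_splitI) (use assms(1) y(2,3) in auto)
qed

lemma C_split_both:
  assumes "C_split x J" "C_split y J"
  shows "C_split (C x y) J"
proof -
  from assms obtain x1 x2 y1 y2 where
    x: "eqA x (C x1 x2)" "leaves x1 = leaves x \<inter> J" "leaves x2 = leaves x - J" and
    y: "eqA y (C y1 y2)" "leaves y1 = leaves y \<inter> J" "leaves y2 = leaves y - J"
    unfolding C_split_def by blast
  have "eqA (C x y) (C (C x1 x2) (C y1 y2))"
    using x(1) y(1) by (rule eqA_C_cong)
  also have "eqA \<dots> (C (C x1 y1) (C x2 y2))"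
    by (rule eqA_C_interchange)
  finally have "eqA (C x y) (C (C x1 y1) (C x2 y2))" .
  then show ?thesis
    by (rule C_splitI) (use x(2,3) y(2,3) in auto)
qed

lemma phi_edge_closed_split:
  assumes "linear t" "edge_closed (phi_edges t) J" "leaves t \<inter> J \<noteq> {}" "\<not> leaves t \<subseteq> J"
  shows "C_split t J"
  using assms
proof (induction t)
  case (Leaf a)
  then show ?case by simp
next
  case (D x y)
  then show ?case
    using phi_D_connected[OF D.prems(1)] unfolding edge_connected_def by blast
next
  case (C x y)
  have "edge_closed (phi_edges x) J" "edge_closed (phi_edges y) J"
    using C.prems(2) unfolding edge_closed_def by auto
  with C.IH C.prems(1) have
    "leaves x \<subseteq> J \<or> leaves x \<inter> J = {} \<or> C_split x J"
    "leaves y \<subseteq> J \<or> leaves y \<inter> J = {} \<or> C_split y J"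
    by auto
  moreover have "leaves x \<inter> leaves y = {}"
    using C.prems(1) by simp
  ultimately show ?case
    using C.prems(3,4) C_split_inside_outside[of x y J] C_split_inside_outside[of y x J]
      C_split_inside[of x J y] C_split_outside[of x J y]
      C_split_inside[of y J x] C_split_outside[of y J x]
      C_split_both[of x J y] C_split_commute[of y x J]
    by auto
qed

text \<open>The relation \<open>D (D p q) y = D p (C y q)\<close> moves nested D's out of the first argument.\<close>

lemma eqA_D_normal_form:
  "linear (D x y) \<Longrightarrow> \<exists>x' y'. eqA (D x y) (D x' y') \<and> (\<forall>p q. x' \<noteq> D p q)"
proof (induction x arbitrary: y)
  case (D p q)
  have merge: "eqA (D (D p q) y) (D p (C y q))"
    by (rule eq_rel2)
  with D.prems have "linear (D p (C y q))"
    using eqA_invariants by blast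
  with D.IH(1) obtain x' y' where "eqA (D p (C y q)) (D x' y')" "\<forall>p q. x' \<noteq> D p q"
    by blast
  with merge show ?case
    by (blast intro: eq_trans)
qed (auto intro: eq_refl)

lemma linear_singleton: "linear t \<Longrightarrow> leaves t = {a} \<Longrightarrow> t = Leaf a"
proof (induction t)
  case (C x y)
  with leaves_nonempty[of x] leaves_nonempty[of y] show ?case
    by (metis Int_absorb1 Un_upper1 Un_upper2 leaves.simps(2) linear.simps(2) subset_singletonD)
next
  case (D x y)
  with leaves_nonempty[of x] leaves_nonempty[of y] show ?case
    by (metis Int_absorb1 Un_upper1 Un_upper2 leaves.simps(3) linear.simps(3) subset_singletonD)
qed simp

lemma children_phi_D:
  assumes "linear (D x y)"
  shows "children (phi_edges (D x y)) (phi_height (D x y)) a =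
    (if a \<in> leaves y then if phi_height y a = 0 then roots (leaves x) (phi_height x)
       else children (phi_edges y) (phi_height y) a
     else children (phi_edges x) (phi_height x) a)"
proof -
  have "shrub_pair (leaves x) (phi_edges x) (phi_height x) (leaves y) (phi_edges y) (phi_height y)"
    using assms by (simp add: shrub_pair_def phi_is_shrub)
  then show ?thesis
    unfolding phi_D by (rule shrub_pair.children_graft)
qed

lemma roots_phi_D:
  "linear (D x y) \<Longrightarrow> roots (leaves (D x y)) (phi_height (D x y)) = roots (leaves x) (phi_height x)"
  by (simp add: roots_graft)

lemma leaves_subset_upper_phi_D:
  assumes "linear (D x y)"
  shows "leaves y \<subseteq> upper (leaves (D x y)) (phi_edges (D x y)) (phi_height (D x y))"
proof
  fix v
  assume v: "v \<in> leaves y"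
  have "linear y" and disjoint: "leaves x \<inter> leaves y = {}"
    using assms by simp_all
  have stay: "u \<in> leaves y \<or> u \<in> roots (leaves x) (phi_height x)"
    if "(covers (phi_edges (D x y)) (phi_height (D x y)))\<^sup>*\<^sup>* v u" for u
    using that
  proof (induction rule: rtranclp_induct)
    case (step w u)
    then have "u \<in> children (phi_edges (D x y)) (phi_height (D x y)) w"
      by (simp add: covers_iff_children)
    with step.IH disjoint shrub_children_subset[OF phi_is_shrub[OF \<open>linear y\<close>]] show ?case
      unfolding children_phi_D[OF assms]
      by (auto simp: roots_def children_height_zero split: if_splits)
  qed (use v in simp)
  have "roots (leaves (D x y)) (phi_height (D x y)) \<subseteq>
      children (phi_edges (D x y)) (phi_height (D x y)) u"
    if "(covers (phi_edges (D x y)) (phi_height (D x y)))\<^sup>*\<^sup>* v u" "phi_height (D x y) u = 1" for u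
  proof -
    have "u \<in> leaves y"
    proof (rule ccontr)
      assume "u \<notin> leaves y"
      with stay[OF that(1)] that(2) show False
        by (simp add: roots_def)
    qed
    with that(2) have "u \<in> leaves y" "phi_height y u = 0"
      by simp_all
    then show ?thesis
      unfolding children_phi_D[OF assms] roots_phi_D[OF assms] by simp
  qed
  with v show "v \<in> upper (leaves (D x y)) (phi_edges (D x y)) (phi_height (D x y))"
    unfolding upper_def by simp
qed

text \<open>If \<open>x\<close> is a leaf or a C-product, no vertex of \<open>phi x\<close> is adjacent to all its roots,
  so no vertex of \<open>x\<close> lies in the upper part.\<close>

lemma upper_phi_D_subset:
  assumes "linear (D x y)" and not_D: "\<forall>p q. x \<noteq> D p q"
  shows "upper (leaves (D x y)) (phi_edges (D x y)) (phi_height (D x y)) \<subseteq> leaves y"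
proof
  fix v
  assume v: "v \<in> upper (leaves (D x y)) (phi_edges (D x y)) (phi_height (D x y))"
  have "linear x" and disjoint: "leaves x \<inter> leaves y = {}"
    using assms by simp_all
  note shrub_x = phi_is_shrub[OF \<open>linear x\<close>]
  show "v \<in> leaves y"
  proof (rule ccontr)
    assume "v \<notin> leaves y"
    with v have "v \<in> leaves x" "0 < phi_height x v"
      unfolding upper_def by auto
    then obtain u where u: "(covers (phi_edges x) (phi_height x))\<^sup>*\<^sup>* v u" "phi_height x u = 1"
      using shrub_descendant_at_height[OF shrub_x, of v 1] by auto
    have "covers (phi_edges (D x y)) (phi_height (D x y)) a b"
      if "covers (phi_edges x) (phi_height x) a b" for a b
      using that disjoint shrub_covers_in[OF shrub_x that]
      unfolding covers_iff_children children_phi_D[OF assms(1)] by auto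
    with u(1) have "(covers (phi_edges (D x y)) (phi_height (D x y)))\<^sup>*\<^sup>* v u"
      using mono_rtranclp by metis
    moreover have "u \<in> leaves x"
      using shrub_descends_in[OF shrub_x u(1) \<open>v \<in> leaves x\<close>] .
    with disjoint u(2) have "u \<notin> leaves y" "phi_height (D x y) u = 1"
      by auto
    ultimately have "roots (leaves (D x y)) (phi_height (D x y)) \<subseteq>
        children (phi_edges (D x y)) (phi_height (D x y)) u"
      using v unfolding upper_def by blast
    with \<open>u \<notin> leaves y\<close>
    have "roots (leaves x) (phi_height x) \<subseteq> children (phi_edges x) (phi_height x) u"
      unfolding children_phi_D[OF assms(1)] roots_phi_D[OF assms(1)] by simp
    with u(2) \<open>linear x\<close> not_D show False
    proof (cases x)
      case (C p q)
      then have "shrub_pair (leaves p) (phi_edges p) (phi_height p)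
          (leaves q) (phi_edges q) (phi_height q)"
        using \<open>linear x\<close> by (simp add: shrub_pair_def phi_is_shrub)
      from shrub_pair.union_no_full_vertex[OF this leaves_nonempty leaves_nonempty]
        \<open>roots (leaves x) (phi_height x) \<subseteq> _\<close> C
      show False
        by simp
    qed simp_all
  qed
qed

lemma upper_phi_D:
  "linear (D x y) \<Longrightarrow> \<forall>p q. x \<noteq> D p q \<Longrightarrow>
    upper (leaves (D x y)) (phi_edges (D x y)) (phi_height (D x y)) = leaves y"
  using leaves_subset_upper_phi_D upper_phi_D_subset by blast

lemma phi_injective_disconnected:
  assumes "linear s" "linear t" "leaves s = leaves t" "phi s = phi t"
    and "\<not> edge_connected (leaves s) (phi_edges s)"
    and IH: "\<And>s' t'. leaves s' \<subset> leaves s \<Longrightarrow> linear s' \<Longrightarrow> linear t' \<Longrightarrow> leaves s' = leaves t' \<Longrightarrow>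
      phi s' = phi t' \<Longrightarrow> eqA s' t'"
  shows "eqA s t"
proof -
  obtain J where J: "edge_closed (phi_edges s) J" "J \<subseteq> leaves s" "J \<noteq> {}" "J \<noteq> leaves s"
    using shrub_disconnectedE[OF phi_is_shrub[OF assms(1)] assms(5)] by blast
  then have "leaves s \<inter> J \<noteq> {}" "\<not> leaves s \<subseteq> J"
    by blast+
  with phi_edge_closed_split[OF assms(1) J(1)] obtain s1 s2
    where s: "eqA s (C s1 s2)" "leaves s1 = leaves s \<inter> J" "leaves s2 = leaves s - J"
    unfolding C_split_def by blast
  have tJ: "edge_closed (phi_edges t) J" "leaves t \<inter> J \<noteq> {}" "\<not> leaves t \<subseteq> J"
    using J(1) \<open>leaves s \<inter> J \<noteq> {}\<close> \<open>\<not> leaves s \<subseteq> J\<close> assms(3,4) by simp_all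
  obtain t1 t2 where t: "eqA t (C t1 t2)" "leaves t1 = leaves s \<inter> J" "leaves t2 = leaves s - J"
    using phi_edge_closed_split[OF assms(2) tJ] assms(3) unfolding C_split_def by auto
  have lin: "linear (C s1 s2)" "linear (C t1 t2)" and "phi (C s1 s2) = phi (C t1 t2)"
    using eqA_invariants[OF s(1)] eqA_invariants[OF t(1)] assms(1,2,4) by auto
  moreover have leaves: "leaves s1 = leaves t1" "leaves s2 = leaves t2"
    using s(2,3) t(2,3) by simp_all
  ultimately have "phi s1 = phi t1" "phi s2 = phi t2"
    by (rule phi_C_parts_eq)+
  moreover have "leaves s1 \<subset> leaves s" "leaves s2 \<subset> leaves s"
    using s(2,3) J(2-4) by blast+
  moreover have "linear s1" "linear s2" "linear t1" "linear t2"
    using lin by simp_all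
  ultimately have "eqA s1 t1" "eqA s2 t2"
    using IH leaves by blast+
  then have "eqA (C s1 s2) (C t1 t2)"
    by (rule eqA_C_cong)
  with s(1) t(1) show ?thesis
    by (blast intro: eq_trans eq_sym)
qed

lemma phi_injective_D:
  assumes "linear (D x y)" "linear (D x' y')" "leaves (D x y) = leaves (D x' y')"
    and "phi (D x y) = phi (D x' y')"
    and IH: "\<And>s' t'. leaves s' \<subset> leaves (D x y) \<Longrightarrow> linear s' \<Longrightarrow> linear t' \<Longrightarrow> leaves s' = leaves t' \<Longrightarrow>
      phi s' = phi t' \<Longrightarrow> eqA s' t'"
  shows "eqA (D x y) (D x' y')"
proof -
  obtain a b where ab: "eqA (D x y) (D a b)" "\<forall>p q. a \<noteq> D p q"
    using eqA_D_normal_form[OF assms(1)] by blast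
  obtain c d where cd: "eqA (D x' y') (D c d)" "\<forall>p q. c \<noteq> D p q"
    using eqA_D_normal_form[OF assms(2)] by blast
  have lin: "linear (D a b)" "linear (D c d)"
    and leaves: "leaves (D a b) = leaves (D c d)" and phi: "phi (D a b) = phi (D c d)"
    using eqA_invariants[OF ab(1)] eqA_invariants[OF cd(1)] assms(1-4) by auto
  have "leaves b = upper (leaves (D a b)) (phi_edges (D a b)) (phi_height (D a b))"
    by (rule upper_phi_D[OF lin(1) ab(2), symmetric])
  also have "\<dots> = upper (leaves (D c d)) (phi_edges (D c d)) (phi_height (D c d))"
    by (simp only: leaves phi)
  also have "\<dots> = leaves d"
    by (rule upper_phi_D[OF lin(2) cd(2)])
  finally have "leaves b = leaves d" .
  moreover from this lin leaves have "leaves a = leaves c"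
    by auto
  moreover have "phi a = phi c" "phi b = phi d"
    using phi_D_parts_eq[OF lin phi leaves \<open>leaves b = leaves d\<close>] by simp_all
  moreover have "leaves a \<subset> leaves (D x y)" "leaves b \<subset> leaves (D x y)"
  proof -
    have "leaves (D x y) = leaves a \<union> leaves b" "leaves a \<inter> leaves b = {}"
      using lin(1) eqA_invariants[OF ab(1)] by auto
    then show "leaves a \<subset> leaves (D x y)" "leaves b \<subset> leaves (D x y)"
      using leaves_nonempty[of a] leaves_nonempty[of b] by blast+
  qed
  moreover have "linear a" "linear b" "linear c" "linear d"
    using lin by simp_all
  ultimately have "eqA a c" "eqA b d"
    using IH by blast+
  then have "eqA (D a b) (D c d)"
    by (rule eqA_D_cong)
  with ab(1) cd(1) show ?thesis
    by (blast intro: eq_trans eq_sym)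
qed

lemma phi_injective:
  "linear s \<Longrightarrow> linear t \<Longrightarrow> leaves s = leaves t \<Longrightarrow> phi s = phi t \<Longrightarrow> eqA s t"
proof (induction "card (leaves s)" arbitrary: s t rule: less_induct)
  case less
  have IH: "eqA s' t'" if "leaves s' \<subset> leaves s" "linear s'" "linear t'" "leaves s' = leaves t'"
    "phi s' = phi t'" for s' t'
    using less.hyps[of s' t'] that psubset_card_mono[OF finite_leaves that(1)] by blast
  show ?case
  proof (cases "edge_connected (leaves s) (phi_edges s)")
    case False
    show ?thesis
      by (rule phi_injective_disconnected[OF less.prems False IH])
  next
    case True
    then have "edge_connected (leaves t) (phi_edges t)"
      using less.prems(3,4) by simp
    with True less.prems(1,2) phi_C_not_connected
    consider a where "s = Leaf a" | a where "t = Leaf a" | x y x' y' where "s = D x y" "t = D x' y'"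
      by (cases s; cases t) auto
    then show ?thesis
    proof cases
      case 1
      with less.prems(2,3) linear_singleton show ?thesis
        by (metis eq_refl leaves.simps(1))
    next
      case 2
      with less.prems(1,3) linear_singleton show ?thesis
        by (metis eq_refl leaves.simps(1))
    next
      case 3
      with less.prems IH show ?thesis
        using phi_injective_D by blast
    qed
  qed
qed

theorem mainTheorem7:
  shows "(\<forall>t :: 'a tm. linear t \<longrightarrow> is_shrub (leaves t) (fst (phi t)) (snd (phi t)))
       \<and> (\<forall>s t :: 'a tm. linear s \<longrightarrow> linear t \<longrightarrow> leaves s = leaves t \<longrightarrow>
            (eqA s t \<longleftrightarrow> phi s = phi t))
       \<and> (\<forall>(I :: 'a set) E h. finite I \<longrightarrow> I \<noteq> {} \<longrightarrow> is_shrub I E h \<longrightarrow>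
            (\<exists>t. linear t \<and> leaves t = I \<and> phi t = (E, h)))"
  using phi_is_shrub eqA_invariants phi_injective phi_surjective unfolding represented_def by blast

end
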